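(* Let $S\in\{0,1\}^\omega$. 1. If $\rho_{\mathrm{LZ}}(S)=1$, then $S$ is not LZ-deep. 2. If $\mathrm{Dim}_{\mathrm{FS}}(S)=0$, then $S$ is not LZ-deep.
   Context: $S\upharpoonright n$ is the length-$n$ prefix of $S$. A finite-state transducer (FST) is $T=(Q,q_0,\delta,\nu)$ with finite state set $Q$, start state $q_0$, $\delta:Q\times\{0,1\}\to Q$, $\nu:Q\times\{0,1\}\to\{0,1\}^*$; $T(\lambda)=\lambda$, $T(xb)=T(x)\nu(\hat\delta(x),b)$; $T$ is an ILFST (information lossless) if $x\mapsto(T(x),\hat\delta(x))$ is injective. LZ denotes the Lempel–Ziv 78 compressor: it parses $x=x_1x_2\cdots x_n$ into phrases such that each phrase is distinct from all earlier ones (except possibly the last) and each phrase is $x_i=x_{l(i)}b_i$ with $l(i)<i$, $b_i\in\{0,1\}$, $x_0=\lambda$; it outputs $\mathrm{LZ}(x)=c_{l(1)}b_1c_{l(2)}b_2\cdots c_{l(n)}b_n$, where $c_j$ is a prefix-free encoding of the dictionary index $j$. $\rho_{\mathrm{LZ}}(S)=\liminf_{n}|\mathrm{LZ}(S\upharpoonright n)|/n$; $\mathrm{Dim}_{\mathrm{FS}}(S)=\inf_{T\in\mathrm{ILFST}}\limsup_n |T(S\upharpoonright n)|/n$. $S$ is LZ-deep if there is $\alpha>0$ such that for every ILFST $C$, $|C(S\upharpoonright n)|-|\mathrm{LZ}(S\upharpoonright n)|\ge\alpha n$ for all but finitely many $n$. *)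

theory Defs
  imports "HOL-Analysis.Analysis" "HOL-Library.Liminf_Limsup"
begin

definition prefix :: "(nat \<Rightarrow> bool) \<Rightarrow> nat \<Rightarrow> bool list" where
  "prefix S n = map S [0..<n]"

record fst =
  st0 :: nat
  dl :: "nat \<Rightarrow> bool \<Rightarrow> nat"
  out :: "nat \<Rightarrow> bool \<Rightarrow> bool list"

definition is_fst :: "fst \<Rightarrow> bool" where
  "is_fst T \<longleftrightarrow> (\<exists>Q. finite Q \<and> st0 T \<in> Q \<and> (\<forall>q\<in>Q. \<forall>b. dl T q b \<in> Q))"

definition delta_hat :: "fst \<Rightarrow> bool list \<Rightarrow> nat" where
  "delta_hat T x = foldl (\<lambda>q b. dl T q b) (st0 T) x"

fun run_from :: "fst \<Rightarrow> nat \<Rightarrow> bool list \<Rightarrow> bool list" where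
  "run_from T q [] = []"
| "run_from T q (b # w) = out T q b @ run_from T (dl T q b) w"

text \<open>T(x): T(lambda) = lambda, T(xb) = T(x) nu(delta_hat x, b).\<close>
definition fst_out :: "fst \<Rightarrow> bool list \<Rightarrow> bool list" where
  "fst_out T x = run_from T (st0 T) x"

definition ilfst :: "fst \<Rightarrow> bool" where
  "ilfst T \<longleftrightarrow> is_fst T \<and> inj (\<lambda>x. (fst_out T x, delta_hat T x))"

text \<open>Binary representation of a natural number (0 has the empty representation).\<close>
fun bin :: "nat \<Rightarrow> bool list" where
  "bin n = (if n = 0 then [] else bin (n div 2) @ [odd n])"

definition code_idx :: "nat \<Rightarrow> bool list" where
  "code_idx j = replicate (length (bin j)) True @ [False] @ bin j"

text \<open>Dictionary index of a phrase: x_0 = lambda has index 0, the k-th phrase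
  (k-th entry of the dictionary list d, counting from 1) has index k.\<close>
definition dict_idx :: "bool list list \<Rightarrow> bool list \<Rightarrow> nat" where
  "dict_idx d q = (if q = [] then 0 else Suc (LEAST j. j < length d \<and> d ! j = q))"

text \<open>Encoding of a phrase x_i = x_{l(i)} b_i as c_{l(i)} b_i.\<close>
definition code_phrase :: "bool list list \<Rightarrow> bool list \<Rightarrow> bool list" where
  "code_phrase d p = code_idx (dict_idx d (butlast p)) @ [last p]"

text \<open>A phrase is closed as soon as it is new;
  at the end of the input the last phrase may coincide with an earlier one.\<close>
fun lz_go :: "bool list list \<Rightarrow> bool list \<Rightarrow> bool list \<Rightarrow> bool list" where
  "lz_go d cur [] = (if cur = [] then [] else code_phrase d cur)"
| "lz_go d cur (b # w) =
     (let p = cur @ [b] in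
        if p \<in> set d then lz_go d p w
        else code_phrase d p @ lz_go (d @ [p]) [] w)"

definition LZ :: "bool list \<Rightarrow> bool list" where
  "LZ x = lz_go [] [] x"

definition rho_LZ :: "(nat \<Rightarrow> bool) \<Rightarrow> ereal" where
  "rho_LZ S = liminf (\<lambda>n. ereal (real (length (LZ (prefix S n))) / real n))"

definition dim_FS :: "(nat \<Rightarrow> bool) \<Rightarrow> ereal" where
  "dim_FS S = (INF T\<in>{T. ilfst T}.
      limsup (\<lambda>n. ereal (real (length (fst_out T (prefix S n))) / real n)))"

definition lz_deep :: "(nat \<Rightarrow> bool) \<Rightarrow> bool" where
  "lz_deep S \<longleftrightarrow> (\<exists>\<alpha>::real. \<alpha> > 0 \<and> (\<forall>C. ilfst C \<longrightarrow>
      (\<forall>\<^sub>F n in sequentially.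
         real (length (fst_out C (prefix S n))) - real (length (LZ (prefix S n))) \<ge> \<alpha> * real n)))"

end

theory Submission
  imports Defs
begin

text \<open>Depth measured against the identity transducer forces LZ to save a fixed fraction
  \<open>\<alpha>\<close> of every long prefix, so \<open>\<rho>\<^sub>L\<^sub>Z(S) \<le> 1 - \<alpha>\<close>. Depth against an arbitrary ILFST
  \<open>C\<close> forces \<open>|C(S\<restriction>n)| \<ge> \<alpha> n\<close>, since the LZ output has nonnegative length, so
  \<open>Dim\<^sub>F\<^sub>S(S) \<ge> \<alpha>\<close>.\<close>

lemma Liminf_ratio_le:
  fixes f :: "nat \<Rightarrow> real"
  assumes "\<forall>\<^sub>F n in sequentially. f n \<le> c * real n"
  shows "liminf (\<lambda>n. ereal (f n / real n)) \<le> ereal c"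
proof (rule Liminf_le)
  show "\<forall>\<^sub>F n in sequentially. ereal (f n / real n) \<le> ereal c"
    using eventually_conj[OF assms eventually_gt_at_top[of 0]]
    by eventually_elim (simp add: divide_le_eq)
qed simp

lemma Limsup_ratio_ge:
  fixes f :: "nat \<Rightarrow> real"
  assumes "\<forall>\<^sub>F n in sequentially. c * real n \<le> f n"
  shows "ereal c \<le> limsup (\<lambda>n. ereal (f n / real n))"
proof (rule le_Limsup)
  show "\<forall>\<^sub>F n in sequentially. ereal c \<le> ereal (f n / real n)"
    using eventually_conj[OF assms eventually_gt_at_top[of 0]]
    by eventually_elim (simp add: le_divide_eq)
qed simp

definition id_fst :: fst where
  "id_fst = \<lparr>st0 = 0, dl = (\<lambda>q b. 0), out = (\<lambda>q b. [b])\<rparr>"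

lemma run_from_id_fst: "run_from id_fst q x = x"
  by (induction x arbitrary: q) (auto simp: id_fst_def)

lemma fst_out_id_fst [simp]: "fst_out id_fst x = x"
  by (simp add: fst_out_def run_from_id_fst)

lemma ilfst_id_fst: "ilfst id_fst"
proof -
  have "is_fst id_fst"
    unfolding is_fst_def by (rule exI[of _ "{0}"]) (simp add: id_fst_def)
  moreover have "inj (\<lambda>x. (fst_out id_fst x, delta_hat id_fst x))"
    by (rule injI) simp
  ultimately show ?thesis
    by (simp add: ilfst_def)
qed

lemma lz_deep_imp_rho_LZ_less_one:
  assumes "lz_deep S"
  shows "rho_LZ S < 1"
proof -
  obtain \<alpha> :: real where "\<alpha> > 0" and deep_id: "\<forall>\<^sub>F n in sequentially.
      real (length (fst_out id_fst (prefix S n))) - real (length (LZ (prefix S n))) \<ge> \<alpha> * real n"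
    using assms ilfst_id_fst unfolding lz_deep_def by blast
  have "\<forall>\<^sub>F n in sequentially. real (length (LZ (prefix S n))) \<le> (1 - \<alpha>) * real n"
    using deep_id by eventually_elim (simp add: prefix_def algebra_simps)
  then have "rho_LZ S \<le> ereal (1 - \<alpha>)"
    unfolding rho_LZ_def by (rule Liminf_ratio_le)
  also have "\<dots> < 1"
    using \<open>\<alpha> > 0\<close> by simp
  finally show ?thesis .
qed

lemma lz_deep_imp_dim_FS_pos:
  assumes "lz_deep S"
  shows "dim_FS S > 0"
proof -
  obtain \<alpha> :: real where "\<alpha> > 0" and deep: "\<And>C. ilfst C \<Longrightarrow> \<forall>\<^sub>F n in sequentially.
      real (length (fst_out C (prefix S n))) - real (length (LZ (prefix S n))) \<ge> \<alpha> * real n"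
    using assms unfolding lz_deep_def by blast
  have "ereal \<alpha> \<le> limsup (\<lambda>n. ereal (real (length (fst_out C (prefix S n))) / real n))"
    if "ilfst C" for C
    using deep[OF that] by (intro Limsup_ratio_ge) (auto elim: eventually_mono)
  then have "ereal \<alpha> \<le> dim_FS S"
    unfolding dim_FS_def by (intro INF_greatest) simp
  moreover have "0 < ereal \<alpha>"
    using \<open>\<alpha> > 0\<close> by simp
  ultimately show ?thesis
    by order
qed

theorem mainTheorem6:
  fixes S :: "nat \<Rightarrow> bool"
  shows "(rho_LZ S = 1 \<longrightarrow> \<not> lz_deep S) \<and> (dim_FS S = 0 \<longrightarrow> \<not> lz_deep S)"
  using lz_deep_imp_rho_LZ_less_one lz_deep_imp_dim_FS_pos by fastforce

end
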